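(* Let $(W,S)$ be a Coxeter system with $S=\{s_0,\dots,s_n\}$ finite, and let $\widetilde\varphi:G_{n,2}\to W$ be the epimorphism with $\widetilde\varphi(\alpha_i)=s_i$; let $H=\ker\widetilde\varphi$. Then $\widetilde{\mathfrak X}_{n,2}(H)$ is a simplicial complex (all multiplicities $1$) and it is isomorphic to the Coxeter complex $X(W,S)$.
   Context: A Coxeter system $(W,S)$: $W$ has presentation $\langle S\mid (st)^{m_{st}},\ s,t\in S\rangle$ with $m_{ss}=1$, $m_{st}\in\{2,3,\dots\}\cup\{\infty\}$ for $s\neq t$ (no relation when $\infty$). For $J\subseteq\{0,\dots,n\}$, $W_J=\langle s_i:i\in J\rangle$ and $\widehat J=\{0,\dots,n\}\setminus J$, $\widehat i=\widehat{\{i\}}$. The Coxeter complex $X(W,S)$ has as vertices the cosets $W_{\widehat i}w$ ($i\in\{0,\dots,n\}$, $w\in W$) and as cells the sets $\{W_{\widehat i}w:i\in J\}$ for $w\in W$, $J\subseteq\{0,\dots,n\}$. $G_{n,2}=\langle\alpha_0,\dots,\alpha_n\mid\alpha_i^2=e\rangle$; $K_J=\langle\alpha_j:j\in J\rangle$. For $H\le G_{n,2}$, $[K_{\widehat J}g]_H=\{K_{\widehat J}gh:h\in H\}$; the multicomplex $\widetilde{\mathfrak X}_{n,2}(H)$ has multicells $[K_{\widehat J}g]_H$ of dimension $|J|-1$, the multicell $[K_{\widehat J}g]_H$ lying over the cell $\{[K_{\widehat i}g]_H:i\in J\}$, and the multiplicity of a cell is the number of multicells over it. *)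

theory Defs
  imports "HOL-Algebra.Algebra" "HOL-Library.Extended_Nat"
begin

text \<open>Elements of G_{n,2} are reduced words over the letters 0..n
  (lists with no two equal adjacent letters); the letter i stands for alpha_i.\<close>

definition red_words :: "nat \<Rightarrow> nat list set" where
  "red_words n = {ws. set ws \<subseteq> {0..n} \<and> (\<forall>k. Suc k < length ws \<longrightarrow> ws ! k \<noteq> ws ! Suc k)}"

definition cancel_cons :: "nat \<Rightarrow> nat list \<Rightarrow> nat list" where
  "cancel_cons x ys = (case ys of [] \<Rightarrow> [x] | y # ys' \<Rightarrow> (if x = y then ys' else x # ys))"

definition word_mult :: "nat list \<Rightarrow> nat list \<Rightarrow> nat list" where
  "word_mult xs ys = foldr cancel_cons xs ys"

definition Gn2 :: "nat \<Rightarrow> nat list monoid" where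
  "Gn2 n = \<lparr>carrier = red_words n, monoid.mult = word_mult, one = []\<rparr>"

definition alpha :: "nat \<Rightarrow> nat list" where
  "alpha i = [i]"

definition Ksub :: "nat \<Rightarrow> nat set \<Rightarrow> nat list set" where
  "Ksub n J = generate (Gn2 n) (alpha ` J)"

definition hat :: "nat \<Rightarrow> nat set \<Rightarrow> nat set" where
  "hat n J = {0..n} - J"

definition coxeter_matrix :: "nat \<Rightarrow> (nat \<Rightarrow> nat \<Rightarrow> enat) \<Rightarrow> bool" where
  "coxeter_matrix n m \<longleftrightarrow>
     (\<forall>i\<le>n. m i i = 1) \<and>
     (\<forall>i\<le>n. \<forall>j\<le>n. m i j = m j i) \<and>
     (\<forall>i\<le>n. \<forall>j\<le>n. i \<noteq> j \<longrightarrow> m i j \<ge> 2)"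

definition phi_tilde :: "('a, 'b) monoid_scheme \<Rightarrow> (nat \<Rightarrow> 'a) \<Rightarrow> nat list \<Rightarrow> 'a" where
  "phi_tilde W s ws = foldr (\<lambda>i acc. s i \<otimes>\<^bsub>W\<^esub> acc) ws \<one>\<^bsub>W\<^esub>"

definition normal_closure :: "('a, 'b) monoid_scheme \<Rightarrow> 'a set \<Rightarrow> 'a set" where
  "normal_closure G A =
     generate G {g \<otimes>\<^bsub>G\<^esub> a \<otimes>\<^bsub>G\<^esub> inv\<^bsub>G\<^esub> g | g a. g \<in> carrier G \<and> a \<in> A}"

definition coxeter_relators :: "nat \<Rightarrow> (nat \<Rightarrow> nat \<Rightarrow> enat) \<Rightarrow> nat list set" where
  "coxeter_relators n m =
     {(alpha i \<otimes>\<^bsub>Gn2 n\<^esub> alpha j) [^]\<^bsub>Gn2 n\<^esub> k | i j k. i \<le> n \<and> j \<le> n \<and> m i j = enat k}"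

text \<open>(W,S) with S = {s_0..s_n} is a Coxeter system with Coxeter matrix m:
  W is a group and tilde-phi : G_{n,2} -> W, alpha_i |-> s_i, is an epimorphism
  whose kernel is the normal closure of the Coxeter relators, i.e.
  W = < S | (s_i s_j)^{m_ij} >.\<close>
definition coxeter_system :: "('a, 'b) monoid_scheme \<Rightarrow> nat \<Rightarrow> (nat \<Rightarrow> 'a) \<Rightarrow> (nat \<Rightarrow> nat \<Rightarrow> enat) \<Rightarrow> bool" where
  "coxeter_system W n s m \<longleftrightarrow>
     group W \<and> coxeter_matrix n m \<and> (\<forall>i\<le>n. s i \<in> carrier W) \<and>
     phi_tilde W s \<in> hom (Gn2 n) W \<and>
     phi_tilde W s ` carrier (Gn2 n) = carrier W \<and>
     kernel (Gn2 n) W (phi_tilde W s) = normal_closure (Gn2 n) (coxeter_relators n m)"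

definition Wsub :: "('a, 'b) monoid_scheme \<Rightarrow> (nat \<Rightarrow> 'a) \<Rightarrow> nat set \<Rightarrow> 'a set" where
  "Wsub W s J = generate W (s ` J)"

definition coxeter_complex :: "('a, 'b) monoid_scheme \<Rightarrow> nat \<Rightarrow> (nat \<Rightarrow> 'a) \<Rightarrow> 'a set set set" where
  "coxeter_complex W n s =
     {(\<lambda>i. Wsub W s (hat n {i}) #>\<^bsub>W\<^esub> w) ` J | J w. J \<subseteq> {0..n} \<and> w \<in> carrier W}"

definition orbit_class :: "nat \<Rightarrow> nat list set \<Rightarrow> nat set \<Rightarrow> nat list \<Rightarrow> nat list set set" where
  "orbit_class n H J g = (\<lambda>h. Ksub n (hat n J) #>\<^bsub>Gn2 n\<^esub> (g \<otimes>\<^bsub>Gn2 n\<^esub> h)) ` H"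

text \<open>Multicells, tagged with their index set J (dimension |J|-1).\<close>
definition multicells :: "nat \<Rightarrow> nat list set \<Rightarrow> (nat set \<times> nat list set set) set" where
  "multicells n H = {(J, orbit_class n H J g) | J g. J \<subseteq> {0..n} \<and> g \<in> carrier (Gn2 n)}"

definition lies_over :: "nat \<Rightarrow> nat list set \<Rightarrow> nat set \<times> nat list set set \<Rightarrow> nat list set set set \<Rightarrow> bool" where
  "lies_over n H M \<sigma> \<longleftrightarrow>
     (\<exists>g \<in> carrier (Gn2 n). snd M = orbit_class n H (fst M) g \<and>
        \<sigma> = (\<lambda>i. orbit_class n H {i} g) ` fst M)"

definition multicomplex_cells :: "nat \<Rightarrow> nat list set \<Rightarrow> nat list set set set set" where
  "multicomplex_cells n H = {\<sigma>. \<exists>M \<in> multicells n H. lies_over n H M \<sigma>}"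

definition multiplicity :: "nat \<Rightarrow> nat list set \<Rightarrow> nat list set set set \<Rightarrow> nat" where
  "multiplicity n H \<sigma> = card {M \<in> multicells n H. lies_over n H M \<sigma>}"

definition complex_iso :: "'v set set \<Rightarrow> 'u set set \<Rightarrow> bool" where
  "complex_iso C D \<longleftrightarrow>
     (\<exists>f. bij_betw f (\<Union>C) (\<Union>D) \<and> (\<forall>\<sigma>. \<sigma> \<subseteq> \<Union>C \<longrightarrow> (\<sigma> \<in> C \<longleftrightarrow> f ` \<sigma> \<in> D)))"

end

theory Submission
  imports Defs Complex_Main
begin

text \<open>Since \<open>phi\<close> maps \<open>K_(hat J)\<close> onto \<open>W_(hat J)\<close> and has kernel \<open>H\<close>, the multicell
  \<open>[K_(hat J) g]_H\<close> is determined by the coset \<open>W_(hat J) phi(g)\<close>. Sending the vertex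
  \<open>[K_(hat i) g]_H\<close> to \<open>W_(hat i) phi(g)\<close> is therefore an isomorphism onto \<open>X(W,S)\<close>,
  provided cosets of \<open>W_(hat i)\<close> and \<open>W_(hat j)\<close> differ for \<open>i \<noteq> j\<close>, i.e. \<open>s i \<notin> W_(hat i)\<close>;
  this is read off the Tits representation. A cell lies under a single multicell because
  \<open>W_(hat J)\<close> is the intersection of the \<open>W_(hat i)\<close>, \<open>i \<in> J\<close>. That follows from Tits' parity
  action on reflections: a reduced word for an element of a standard parabolic subgroup \<open>W_I\<close>
  only uses letters of \<open>I\<close>.\<close>

section \<open>The free product \<open>G_(n,2)\<close> as a group of reduced words\<close>

lemma red_words_successively:
  "red_words n = {ws. set ws \<subseteq> {0..n} \<and> successively (\<noteq>) ws}"
  by (simp add: red_words_def successively_conv_nth)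

lemma Nil_in_red_words [simp]: "[] \<in> red_words n"
  by (simp add: red_words_def)

lemma Cons_in_red_words_iff:
  "x # ys \<in> red_words n \<longleftrightarrow> x \<le> n \<and> ys \<in> red_words n \<and> (ys \<noteq> [] \<longrightarrow> hd ys \<noteq> x)"
  by (auto simp: red_words_successively successively_Cons)

lemma rev_in_red_words: "xs \<in> red_words n \<Longrightarrow> rev xs \<in> red_words n"
  by (simp add: red_words_successively eq_commute[where 'a = nat])

lemma red_words_letters: "ys \<in> red_words n \<Longrightarrow> set ys \<subseteq> {0..n}"
  by (simp add: red_words_def)

lemma cancel_cons_in_red_words:
  "x \<le> n \<Longrightarrow> ys \<in> red_words n \<Longrightarrow> cancel_cons x ys \<in> red_words n"
  by (cases ys) (auto simp: cancel_cons_def Cons_in_red_words_iff)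

lemma cancel_cons_cancel_cons: "ys \<in> red_words n \<Longrightarrow> cancel_cons x (cancel_cons x ys) = ys"
  by (cases ys) (auto simp: cancel_cons_def Cons_in_red_words_iff split: list.splits)

lemma set_cancel_cons: "set (cancel_cons x ys) \<subseteq> insert x (set ys)"
  by (cases ys) (auto simp: cancel_cons_def)

lemma word_mult_Nil [simp]: "word_mult [] ys = ys"
  by (simp add: word_mult_def)

lemma word_mult_Cons [simp]: "word_mult (x # xs) ys = cancel_cons x (word_mult xs ys)"
  by (simp add: word_mult_def)

lemma word_mult_append: "word_mult (xs @ ys) zs = word_mult xs (word_mult ys zs)"
  by (simp add: word_mult_def)

lemma word_mult_in_red_words:
  "set xs \<subseteq> {0..n} \<Longrightarrow> ys \<in> red_words n \<Longrightarrow> word_mult xs ys \<in> red_words n"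
  by (induction xs) (auto simp: cancel_cons_in_red_words)

lemma set_word_mult: "set (word_mult xs ys) \<subseteq> set xs \<union> set ys"
  by (induction xs) (use set_cancel_cons in fastforce)+

lemma cancel_cons_word_mult:
  assumes "ys \<in> red_words n" "zs \<in> red_words n"
  shows "word_mult (cancel_cons x ys) zs = cancel_cons x (word_mult ys zs)"
proof (cases "ys \<noteq> [] \<and> hd ys = x")
  case True
  then obtain ys' where ys': "ys = x # ys'" by (cases ys) auto
  then have "word_mult ys' zs \<in> red_words n"
    using assms by (simp add: Cons_in_red_words_iff red_words_letters word_mult_in_red_words)
  moreover have "cancel_cons x ys = ys'" using ys' by (simp add: cancel_cons_def)
  ultimately show ?thesis using ys' by (simp add: cancel_cons_cancel_cons)
next
  case False
  then have "cancel_cons x ys = x # ys" by (cases ys) (auto simp: cancel_cons_def)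
  then show ?thesis by simp
qed

lemma word_mult_assoc:
  assumes "set xs \<subseteq> {0..n}" "ys \<in> red_words n" "zs \<in> red_words n"
  shows "word_mult (word_mult xs ys) zs = word_mult xs (word_mult ys zs)"
  using assms
proof (induction xs)
  case (Cons x xs)
  then have "word_mult xs ys \<in> red_words n" by (simp add: word_mult_in_red_words)
  with Cons show ?case by (simp add: cancel_cons_word_mult)
qed simp

lemma word_mult_rev_self: "xs \<in> red_words n \<Longrightarrow> word_mult (rev xs) xs = []"
proof (induction xs)
  case (Cons x xs)
  then show ?case
    by (simp add: word_mult_append cancel_cons_def Cons_in_red_words_iff)
qed simp

lemma group_Gn2: "group (Gn2 n)"
proof (rule groupI)
  fix x y z
  assume "x \<in> carrier (Gn2 n)" "y \<in> carrier (Gn2 n)" "z \<in> carrier (Gn2 n)"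
  then show "x \<otimes>\<^bsub>Gn2 n\<^esub> y \<otimes>\<^bsub>Gn2 n\<^esub> z = x \<otimes>\<^bsub>Gn2 n\<^esub> (y \<otimes>\<^bsub>Gn2 n\<^esub> z)"
    by (simp add: Gn2_def word_mult_assoc[OF red_words_letters])
next
  fix x assume "x \<in> carrier (Gn2 n)"
  then show "\<exists>y\<in>carrier (Gn2 n). y \<otimes>\<^bsub>Gn2 n\<^esub> x = \<one>\<^bsub>Gn2 n\<^esub>"
    by (auto simp: Gn2_def intro!: bexI[of _ "rev x"] rev_in_red_words word_mult_rev_self)
qed (simp_all add: Gn2_def word_mult_in_red_words red_words_letters)

section \<open>The Tits representation\<close>

text \<open>A vector is a function \<open>nat \<Rightarrow> real\<close> whose coordinates
  \<open>0..n\<close> matter, \<open>c i j\<close> plays the role of \<open>B(e\<^sub>i, e\<^sub>j) = - cos (\<pi> / m\<^sub>i\<^sub>j)\<close>, and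
  \<open>bform n c l v\<close> is \<open>B(e\<^sub>l, v)\<close>.\<close>

definition unit_vec :: "nat \<Rightarrow> nat \<Rightarrow> real" where
  "unit_vec i p = (if p = i then 1 else 0)"

definition bform :: "nat \<Rightarrow> (nat \<Rightarrow> nat \<Rightarrow> real) \<Rightarrow> nat \<Rightarrow> (nat \<Rightarrow> real) \<Rightarrow> real" where
  "bform n c l v = (\<Sum>q\<in>{0..n}. c l q * v q)"

definition reflection :: "nat \<Rightarrow> (nat \<Rightarrow> nat \<Rightarrow> real) \<Rightarrow> nat \<Rightarrow> (nat \<Rightarrow> real) \<Rightarrow> nat \<Rightarrow> real" where
  "reflection n c l v = (if l \<le> n then (\<lambda>p. v p - 2 * bform n c l v * unit_vec l p) else v)"

lemma bform_add [simp]: "bform n c l (\<lambda>p. f p + g p) = bform n c l f + bform n c l g"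
  by (simp add: bform_def algebra_simps sum.distrib)

lemma bform_diff [simp]: "bform n c l (\<lambda>p. f p - g p) = bform n c l f - bform n c l g"
  by (simp add: bform_def algebra_simps sum_subtractf)

lemma bform_scaleL [simp]: "bform n c l (\<lambda>p. A * f p) = A * bform n c l f"
  by (simp add: bform_def sum_distrib_left algebra_simps)

lemma bform_scaleR [simp]: "bform n c l (\<lambda>p. f p * A) = bform n c l f * A"
  by (simp add: bform_def sum_distrib_right algebra_simps)

lemma bform_unit_vec [simp]: "a \<le> n \<Longrightarrow> bform n c l (unit_vec a) = c l a"
  by (simp add: bform_def unit_vec_def if_distrib cong: if_cong)

lemma bform_scale_unit_vec [simp]:
  "a \<le> n \<Longrightarrow> bform n c l (\<lambda>p. A * unit_vec a p) = A * c l a"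
  "a \<le> n \<Longrightarrow> bform n c l (\<lambda>p. unit_vec a p * A) = c l a * A"
  using bform_scaleL[of n c l A "unit_vec a"] bform_scaleR[of n c l "unit_vec a" A]
  by (simp_all add: mult.commute)

lemma reflection_involution:
  assumes "\<And>l. l \<le> n \<Longrightarrow> c l l = 1"
  shows "reflection n c l \<circ> reflection n c l = id"
proof (rule ext)
  fix v
  show "(reflection n c l \<circ> reflection n c l) v = id v"
  proof (cases "l \<le> n")
    case True
    have "bform n c l (reflection n c l v) = - bform n c l v"
      using True assms by (simp add: reflection_def)
    then show ?thesis using True assms[OF True] by (simp add: reflection_def fun_eq_iff algebra_simps)
  qed (simp add: reflection_def)
qed

lemma cos_recurrence_closed_form:
  fixes x :: "nat \<Rightarrow> real"
  assumes rec: "\<And>p. x (Suc (Suc p)) = 2 * cos \<phi> * x (Suc p) - x p" and sin: "sin \<phi> \<noteq> 0"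
  shows "x p = x 0 * cos (p * \<phi>) + ((x 1 - x 0 * cos \<phi>) / sin \<phi>) * sin (p * \<phi>)"
proof (induction p rule: nat_less_induct)
  case (1 p)
  define Q where "Q = (x 1 - x 0 * cos \<phi>) / sin \<phi>"
  have cos_rec: "cos (Suc (Suc r) * \<phi>) = 2 * cos \<phi> * cos (Suc r * \<phi>) - cos (r * \<phi>)"
    and sin_rec: "sin (Suc (Suc r) * \<phi>) = 2 * cos \<phi> * sin (Suc r * \<phi>) - sin (r * \<phi>)" for r
  proof -
    have "Suc (Suc r) * \<phi> = Suc r * \<phi> + \<phi>" "r * \<phi> = Suc r * \<phi> - \<phi>"
      by (simp_all add: algebra_simps)
    then show "cos (Suc (Suc r) * \<phi>) = 2 * cos \<phi> * cos (Suc r * \<phi>) - cos (r * \<phi>)"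
      and "sin (Suc (Suc r) * \<phi>) = 2 * cos \<phi> * sin (Suc r * \<phi>) - sin (r * \<phi>)"
      by (simp_all only:) (simp_all add: cos_add cos_diff sin_add sin_diff)
  qed
  consider "p = 0" | "p = 1" | r where "p = Suc (Suc r)"
    by (metis One_nat_def not0_implies_Suc)
  then show ?case
  proof cases
    case 3
    have IH: "x q = x 0 * cos (q * \<phi>) + Q * sin (q * \<phi>)" if "q < p" for q
      using 1 that unfolding Q_def by blast
    have "x p = 2 * cos \<phi> * x (Suc r) - x r" using rec 3 by simp
    also have "\<dots> = x 0 * (2 * cos \<phi> * cos (Suc r * \<phi>) - cos (r * \<phi>))
                  + Q * (2 * cos \<phi> * sin (Suc r * \<phi>) - sin (r * \<phi>))"
      using IH[of r] IH[of "Suc r"] 3 by (simp add: algebra_simps)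
    finally show ?thesis using 3 by (simp only: cos_rec sin_rec Q_def)
  qed (use sin in \<open>simp_all add: field_simps\<close>)
qed

lemma cos_recurrence_periodic:
  fixes x :: "nat \<Rightarrow> real"
  assumes k: "k \<ge> 3" and rec: "\<And>p. x (Suc (Suc p)) = 2 * cos (2 * pi / k) * x (Suc p) - x p"
  shows "x k = x 0"
proof -
  have "0 < 2 * pi / k" "2 * pi / k < pi" using k by (auto simp: field_simps)
  then have "sin (2 * pi / k) \<noteq> 0" using sin_gt_zero by (metis less_irrefl)
  moreover have "real k * (2 * pi / real k) = 2 * pi" using k by simp
  ultimately show ?thesis using cos_recurrence_closed_form[where x = x and \<phi> = "2 * pi / k" and p = k, OF rec] by simp
qed

lemma reflection_pair_apply:
  assumes ij: "i \<le> n" "j \<le> n" "i \<noteq> j"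
    and c: "c i i = 1" "c j j = 1" "c i j = cc" "c j i = cc"
  defines "\<rho> \<equiv> reflection n c i \<circ> reflection n c j"
  shows "\<rho> w = (\<lambda>p. w p + (4 * cc * bform n c j w - 2 * bform n c i w) * unit_vec i p
                        - 2 * bform n c j w * unit_vec j p)"
    and "bform n c i (\<rho> w) = - bform n c i w + 2 * cc * bform n c j w"
    and "bform n c j (\<rho> w) = - 2 * cc * bform n c i w + (4 * cc\<^sup>2 - 1) * bform n c j w"
proof -
  have "bform n c i (reflection n c j w) = bform n c i w - 2 * c i j * bform n c j w"
    using ij by (simp add: reflection_def)
  then show \<rho>: "\<rho> w = (\<lambda>p. w p + (4 * cc * bform n c j w - 2 * bform n c i w) * unit_vec i p
                             - 2 * bform n c j w * unit_vec j p)"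
    using ij c by (simp add: \<rho>_def reflection_def fun_eq_iff algebra_simps)
  show "bform n c i (\<rho> w) = - bform n c i w + 2 * cc * bform n c j w"
    unfolding \<rho> using ij c by (simp add: algebra_simps)
  show "bform n c j (\<rho> w) = - 2 * cc * bform n c i w + (4 * cc\<^sup>2 - 1) * bform n c j w"
    unfolding \<rho> using ij c by (simp add: algebra_simps power2_eq_square)
qed

text \<open>The coordinates of the orbit of a vector under the rotation \<open>\<sigma>\<^sub>i \<sigma>\<^sub>j\<close> are governed by
  a matrix of trace \<open>4 cc\<^sup>2 - 2 = 2 cos (2\<pi>/k)\<close> and determinant 1, so by Cayley-Hamilton both
  satisfy the recurrence of \<open>cos (2\<pi>p/k)\<close> and are \<open>k\<close>-periodic.\<close>

lemma rotation_coords_periodic: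
  fixes a b :: "nat \<Rightarrow> real"
  assumes k: "k \<ge> 2" and cc: "cc = - cos (pi / k)"
    and ra: "\<And>p. a (Suc p) = - a p + 2 * cc * b p"
    and rb: "\<And>p. b (Suc p) = - 2 * cc * a p + (4 * cc\<^sup>2 - 1) * b p"
  shows "a k = a 0" and "b k = b 0"
proof -
  have "a k = a 0 \<and> b k = b 0"
  proof (cases "k = 2")
    case True
    then have "cc = 0" using cc by simp
    then show ?thesis using True ra rb by (simp add: numeral_2_eq_2)
  next
    case False
    then have k3: "k \<ge> 3" using k by simp
    have trace: "4 * cc\<^sup>2 - 2 = 2 * cos (2 * pi / k)"
      using cos_double_cos[of "pi / k"] cc by simp
    have "a (Suc (Suc p)) = 2 * cos (2 * pi / k) * a (Suc p) - a p" for p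
    proof -
      have "2 * cc * b p = a (Suc p) + a p" using ra[of p] by simp
      moreover have "a (Suc (Suc p)) = - a (Suc p) - 4 * cc\<^sup>2 * a p + (4 * cc\<^sup>2 - 1) * (2 * cc * b p)"
        using ra[of "Suc p"] rb[of p] by (simp add: algebra_simps power2_eq_square)
      ultimately have "a (Suc (Suc p)) = (4 * cc\<^sup>2 - 2) * a (Suc p) - a p"
        by (simp add: algebra_simps)
      then show ?thesis by (simp only: trace)
    qed
    moreover have "b (Suc (Suc p)) = 2 * cos (2 * pi / k) * b (Suc p) - b p" for p
    proof -
      have "- 2 * cc * a (Suc p) = 2 * cc * a p - 4 * cc\<^sup>2 * b p"
        by (simp add: ra algebra_simps power2_eq_square)
      moreover have "b (Suc p) = - 2 * cc * a p + 4 * cc\<^sup>2 * b p - b p"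
        by (simp add: rb algebra_simps)
      ultimately have "- 2 * cc * a (Suc p) = - b (Suc p) - b p" by linarith
      then have "b (Suc (Suc p)) = (4 * cc\<^sup>2 - 2) * b (Suc p) - b p"
        using rb[of "Suc p"] by (simp add: algebra_simps power2_eq_square)
      then show ?thesis by (simp only: trace)
    qed
    ultimately show ?thesis using cos_recurrence_periodic[OF k3] by blast
  qed
  then show "a k = a 0" and "b k = b 0" by simp_all
qed

lemma rotation_coords_sum_zero:
  fixes a b :: "nat \<Rightarrow> real"
  assumes k: "k \<ge> 2" and cc: "cc = - cos (pi / k)"
    and ra: "\<And>p. a (Suc p) = - a p + 2 * cc * b p"
    and rb: "\<And>p. b (Suc p) = - 2 * cc * a p + (4 * cc\<^sup>2 - 1) * b p"
  shows "(\<Sum>q<k. a q) = 0" and "(\<Sum>q<k. b q) = 0"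
proof -
  define A B where "A = (\<Sum>q<k. a q)" and "B = (\<Sum>q<k. b q)"
  have "(\<Sum>q<k. a (Suc q)) = A" "(\<Sum>q<k. b (Suc q)) = B"
    using rotation_coords_periodic[where a = a and b = b, OF assms] sum.lessThan_Suc_shift[of a k] sum.lessThan_Suc[of a k]
      sum.lessThan_Suc_shift[of b k] sum.lessThan_Suc[of b k]
    by (simp_all add: A_def B_def)
  moreover have "(\<Sum>q<k. a (Suc q)) = - A + 2 * cc * B"
    unfolding ra A_def B_def by (simp add: sum.distrib sum_distrib_left sum_subtractf)
  moreover have "(\<Sum>q<k. b (Suc q)) = - 2 * cc * A + (4 * cc\<^sup>2 - 1) * B"
    unfolding rb A_def B_def by (simp add: sum.distrib sum_distrib_left sum_subtractf sum_negf)
  ultimately have "A = - A + 2 * cc * B" "B = - 2 * cc * A + (4 * cc\<^sup>2 - 1) * B" by simp_all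
  then have AB: "A = cc * B" "B * (1 - cc\<^sup>2) = 0" by (simp_all add: algebra_simps power2_eq_square)
  have "0 < pi / k" "pi / k < pi" using k by (auto simp: field_simps)
  then have "sin (pi / k) > 0" by (rule sin_gt_zero)
  then have "sin (pi / k) ^ 2 > 0" by simp
  then have "cc\<^sup>2 < 1" using sin_cos_squared_add[of "pi / k"] cc by (simp only: power2_minus)
  then show "(\<Sum>q<k. a q) = 0" and "(\<Sum>q<k. b q) = 0" using AB by (simp_all add: A_def B_def)
qed

lemma reflection_dihedral_relation:
  assumes ij: "i \<le> n" "j \<le> n" "i \<noteq> j" and k: "k \<ge> 2"
    and c: "c i i = 1" "c j j = 1" "c i j = - cos (pi / k)" "c j i = - cos (pi / k)"
  shows "(reflection n c i \<circ> reflection n c j) ^^ k = id"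
proof
  fix u
  define cc where "cc = - cos (pi / k)"
  define \<rho> where "\<rho> = reflection n c i \<circ> reflection n c j"
  define a b where "a p = bform n c i ((\<rho> ^^ p) u)" and "b p = bform n c j ((\<rho> ^^ p) u)" for p
  note step = reflection_pair_apply[OF ij c[folded cc_def], folded \<rho>_def]
  have ra: "a (Suc p) = - a p + 2 * cc * b p"
    and rb: "b (Suc p) = - 2 * cc * a p + (4 * cc\<^sup>2 - 1) * b p" for p
    by (simp_all only: a_def b_def funpow.simps(2) comp_apply step(2,3))
  have orbit: "(\<rho> ^^ l) u = (\<lambda>p. u p + (\<Sum>q<l. 4 * cc * b q - 2 * a q) * unit_vec i p
                                  - (\<Sum>q<l. 2 * b q) * unit_vec j p)" for l
  proof (induction l)
    case (Suc l)
    have "(\<rho> ^^ Suc l) u = \<rho> ((\<rho> ^^ l) u)" by simp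
    also have "\<dots> = (\<lambda>p. (\<rho> ^^ l) u p + (4 * cc * b l - 2 * a l) * unit_vec i p - 2 * b l * unit_vec j p)"
      by (simp only: step(1) a_def b_def)
    finally show ?case by (simp add: Suc algebra_simps)
  qed simp
  have "(\<Sum>q<k. a q) = 0" "(\<Sum>q<k. b q) = 0"
    using rotation_coords_sum_zero[where a = a and b = b, OF k cc_def ra rb] by simp_all
  then have "(\<rho> ^^ k) u = u"
    by (simp add: orbit sum_subtractf sum_distrib_left[symmetric])
  then show "((reflection n c i \<circ> reflection n c j) ^^ k) u = id u" by (simp add: \<rho>_def)
qed

definition word_action :: "(nat \<Rightarrow> 'c \<Rightarrow> 'c) \<Rightarrow> nat list \<Rightarrow> 'c \<Rightarrow> 'c" where
  "word_action f ws = foldr (\<lambda>i g. f i \<circ> g) ws id"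

lemma word_action_Nil [simp]: "word_action f [] = id"
  by (simp add: word_action_def)

lemma word_action_Cons [simp]: "word_action f (x # xs) = f x \<circ> word_action f xs"
  by (simp add: word_action_def)

lemma word_action_append: "word_action f (xs @ ys) = word_action f xs \<circ> word_action f ys"
  by (induction xs) auto

context
  fixes f :: "nat \<Rightarrow> 'c \<Rightarrow> 'c"
  assumes involution: "\<And>l. f l \<circ> f l = id"
begin

lemma word_action_cancel_cons: "word_action f (cancel_cons x w) = f x \<circ> word_action f w"
proof (cases w)
  case (Cons y w')
  have "f x \<circ> (f x \<circ> word_action f w') = word_action f w'"
    by (simp add: comp_assoc[symmetric] involution)
  then show ?thesis using Cons by (auto simp: cancel_cons_def)
qed (simp add: cancel_cons_def)

lemma word_action_word_mult: "word_action f (word_mult xs ys) = word_action f xs \<circ> word_action f ys"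
  by (induction xs) (simp_all add: word_action_cancel_cons comp_assoc)

lemma word_action_rev: "word_action f (rev xs) \<circ> word_action f xs = id"
proof (induction xs)
  case (Cons x xs)
  have "word_action f (rev (x # xs)) \<circ> word_action f (x # xs)
        = word_action f (rev xs) \<circ> (f x \<circ> f x) \<circ> word_action f xs"
    by (simp add: word_action_append comp_assoc)
  then show ?case using Cons by (simp only: involution id_comp comp_id)
qed simp

lemma word_action_normal_closure:
  assumes A: "A \<subseteq> carrier (Gn2 n)" and trivial: "\<And>r. r \<in> A \<Longrightarrow> word_action f r = id"
    and x: "x \<in> normal_closure (Gn2 n) A"
  shows "word_action f x = id"
proof -
  interpret G: group "Gn2 n" by (rule group_Gn2)
  have action_mult: "word_action f (a \<otimes>\<^bsub>Gn2 n\<^esub> b) = word_action f a \<circ> word_action f b" for a b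
    by (simp add: Gn2_def word_action_word_mult)
  have inverse: "word_action f (inv\<^bsub>Gn2 n\<^esub> g) \<circ> word_action f g = id" if "g \<in> carrier (Gn2 n)" for g
    using that by (simp add: action_mult[symmetric]) (simp add: Gn2_def)
  have conjugates: "word_action f (g \<otimes>\<^bsub>Gn2 n\<^esub> r \<otimes>\<^bsub>Gn2 n\<^esub> inv\<^bsub>Gn2 n\<^esub> g) = id"
    if "g \<in> carrier (Gn2 n)" "r \<in> A" for g r
    using that trivial inverse[of "inv\<^bsub>Gn2 n\<^esub> g"] by (simp add: action_mult)
  from x show ?thesis unfolding normal_closure_def
  proof (induction rule: generate.induct)
    case one
    then show ?case by (simp add: Gn2_def)
  next
    case (incl h)
    then show ?case using conjugates by blast
  next
    case (inv h)
    then have "h \<in> carrier (Gn2 n)" using A by auto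
    with inv conjugates inverse[of h] show ?case by auto
  next
    case (eng h1 h2)
    then show ?case by (simp add: action_mult)
  qed
qed

end

lemma length_filter_upt_periodic:
  assumes "\<And>p. P (k + p) = P p"
  shows "length (filter P [0..<k + k]) = 2 * length (filter P [0..<k])"
proof -
  have "[0..<k + k] = [0..<k] @ map (\<lambda>p. p + k) [0..<k]"
    by (simp only: map_add_upt upt_add_eq_append[OF le0])
  moreover have "filter (P \<circ> (\<lambda>p. p + k)) [0..<k] = filter P [0..<k]"
    using assms by (intro filter_cong) (simp_all add: add.commute)
  ultimately show ?thesis by (simp only: filter_append filter_map length_append length_map)
qed

lemma (in group) conj_eq_iff:
  assumes "a \<in> carrier G" "b \<in> carrier G" "t \<in> carrier G" "y \<in> carrier G" "a \<otimes> b = \<one>"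
  shows "a \<otimes> t \<otimes> b = y \<longleftrightarrow> t = b \<otimes> y \<otimes> a"
proof -
  have "b \<otimes> a = \<one>" using assms inv_comm by blast
  then have cancel: "a \<otimes> (b \<otimes> z) = z" "b \<otimes> (a \<otimes> z) = z" if "z \<in> carrier G" for z
    using assms that by (metis m_assoc l_one)+
  show ?thesis
  proof
    assume "a \<otimes> t \<otimes> b = y"
    then show "t = b \<otimes> y \<otimes> a" using assms cancel \<open>b \<otimes> a = \<one>\<close> by (auto simp: m_assoc)
  next
    assume "t = b \<otimes> y \<otimes> a"
    then show "a \<otimes> t \<otimes> b = y" using assms cancel by (simp add: m_assoc)
  qed
qed

lemma (in group) pow_mult_swap:
  "a \<in> carrier G \<Longrightarrow> b \<in> carrier G \<Longrightarrow> b \<otimes> (a \<otimes> b) [^] (l::nat) = (b \<otimes> a) [^] l \<otimes> b"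
proof (induction l)
  case (Suc l)
  then have "b \<otimes> (a \<otimes> b) [^] Suc l = (b \<otimes> a) [^] l \<otimes> (b \<otimes> a) \<otimes> b"
    by (simp add: m_assoc[symmetric])
  then show ?case by simp
qed simp

lemma (in group) involution_pow_inverse:
  assumes "a \<in> carrier G" "b \<in> carrier G" "a \<otimes> a = \<one>" "b \<otimes> b = \<one>"
  shows "(a \<otimes> b) [^] (l::nat) \<otimes> (b \<otimes> a) [^] l = \<one>"
proof -
  have "inv a = a" "inv b = b" using assms by (simp_all add: inv_equality)
  then have "b \<otimes> a = inv (a \<otimes> b)" using assms by (simp add: inv_mult_group)
  then show ?thesis using assms by (simp add: nat_pow_inv)
qed

lemma (in group) rcos_eq_iff:
  assumes "subgroup A G" "x \<in> carrier G" "y \<in> carrier G"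
  shows "A #> x = A #> y \<longleftrightarrow> x \<otimes> inv y \<in> A"
proof
  assume "A #> x = A #> y"
  then have "x \<in> A #> y" using rcos_self assms by blast
  then show "x \<otimes> inv y \<in> A" using subgroup.rcos_module_imp[OF assms(1) is_group assms(3)] by blast
next
  assume "x \<otimes> inv y \<in> A"
  then have "x \<in> A #> y" using subgroup.rcos_module_rev[OF assms(1) is_group assms(3,2)] by blast
  then show "A #> x = A #> y" using repr_independence[of x A y] assms by simp
qed

lemma (in group) rcos_eq_imp_subgroup_eq:
  assumes A: "subgroup A G" and B: "subgroup B G" and x: "x \<in> carrier G" and y: "y \<in> carrier G"
    and eq: "A #> x = B #> y"
  shows "A = B"
proof -
  have "x \<in> B #> y" using eq rcos_self[OF x A] by simp
  then have "B #> y = B #> x" using repr_independence[OF _ y B] by simp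
  then have "A #> x #> inv x = B #> x #> inv x" using eq by simp
  then show ?thesis using A B x by (simp add: coset_mult_assoc subgroup.subset)
qed

lemma complex_iso_images:
  assumes same_fibres: "\<And>p q. p \<in> \<Union>S \<Longrightarrow> q \<in> \<Union>S \<Longrightarrow> a p = a q \<longleftrightarrow> b p = b q"
  shows "complex_iso ((`) a ` S) ((`) b ` S)"
  unfolding complex_iso_def
proof (intro exI conjI allI impI)
  define f where "f = b \<circ> inv_into (\<Union>S) a"
  have f_a: "f (a p) = b p" if "p \<in> \<Union>S" for p
    using that same_fibres[OF inv_into_into[of "a p" a "\<Union>S"] that] by (simp add: f_def f_inv_into_f)
  have image_f: "f ` a ` T = b ` T" if "T \<subseteq> \<Union>S" for T
  proof -
    have "f ` a ` T = (\<lambda>p. f (a p)) ` T" by (simp add: image_image)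
    also have "\<dots> = b ` T" using that by (intro image_cong) (auto intro!: f_a)
    finally show ?thesis .
  qed
  have inj: "inj_on f (a ` \<Union>S)"
  proof (rule inj_onI)
    fix x y assume "x \<in> a ` \<Union>S" "y \<in> a ` \<Union>S" "f x = f y"
    then obtain p q where "p \<in> \<Union>S" "q \<in> \<Union>S" "x = a p" "y = a q" by blast
    with \<open>f x = f y\<close> show "x = y" using same_fibres by (simp add: f_a)
  qed
  moreover have "f ` a ` \<Union>S = b ` \<Union>S" by (rule image_f) (rule order_refl)
  ultimately show "bij_betw f (\<Union>((`) a ` S)) (\<Union>((`) b ` S))"
    by (simp add: bij_betw_def image_Union[symmetric])
  fix \<sigma> assume \<sigma>: "\<sigma> \<subseteq> \<Union>((`) a ` S)"
  show "\<sigma> \<in> (`) a ` S \<longleftrightarrow> f ` \<sigma> \<in> (`) b ` S"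
  proof
    assume "\<sigma> \<in> (`) a ` S"
    then obtain T where "T \<in> S" "\<sigma> = a ` T" by blast
    moreover from this have "f ` \<sigma> = b ` T" using image_f by (simp add: Union_upper)
    ultimately show "f ` \<sigma> \<in> (`) b ` S" by (intro image_eqI)
  next
    assume "f ` \<sigma> \<in> (`) b ` S"
    then obtain T where T: "T \<in> S" "f ` \<sigma> = b ` T" by blast
    then have "f ` a ` T = f ` \<sigma>" using image_f by (simp add: Union_upper)
    moreover have "a ` T \<subseteq> a ` \<Union>S" using T(1) by (intro image_mono Union_upper)
    moreover have "\<sigma> \<subseteq> a ` \<Union>S" using \<sigma> by (simp add: image_Union)
    ultimately have "\<sigma> = a ` T" by (simp add: inj_on_image_eq_iff[OF inj])
    then show "\<sigma> \<in> (`) a ` S" using T(1) by (rule image_eqI)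
  qed
qed

locale coxeter =
  fixes W :: "('a, 'b) monoid_scheme" and n :: nat and s :: "nat \<Rightarrow> 'a"
    and m :: "nat \<Rightarrow> nat \<Rightarrow> enat"
  assumes coxeter_system: "coxeter_system W n s m"
begin

abbreviation "G \<equiv> Gn2 n"
abbreviation "phi \<equiv> phi_tilde W s"

lemma group_hom_phi: "group_hom G W phi"
  using coxeter_system group_Gn2
  by (simp add: coxeter_system_def group_hom_def group_hom_axioms_def)

sublocale W: group W
  using group_hom_phi by (simp add: group_hom_def group_hom_axioms_def)

sublocale G: group G
  by (rule group_Gn2)

sublocale phi: group_hom G W phi
  by (rule group_hom_phi)

lemma s_closed: "i \<le> n \<Longrightarrow> s i \<in> carrier W"
  using coxeter_system by (simp add: coxeter_system_def)

lemma phi_surj: "phi ` carrier G = carrier W"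
  using coxeter_system by (simp add: coxeter_system_def)

lemma kernel_phi: "kernel G W phi = normal_closure G (coxeter_relators n m)"
  using coxeter_system by (simp add: coxeter_system_def)

lemma m_diag: "i \<le> n \<Longrightarrow> m i i = 1"
  and m_sym: "i \<le> n \<Longrightarrow> j \<le> n \<Longrightarrow> m i j = m j i"
  and m_offdiag: "i \<le> n \<Longrightarrow> j \<le> n \<Longrightarrow> i \<noteq> j \<Longrightarrow> m i j \<ge> 2"
  using coxeter_system by (simp_all add: coxeter_system_def coxeter_matrix_def)

lemma carrier_G: "carrier G = red_words n"
  and mult_G: "x \<otimes>\<^bsub>G\<^esub> y = word_mult x y"
  and one_G: "\<one>\<^bsub>G\<^esub> = []"
  by (simp_all add: Gn2_def)

lemma phi_Nil [simp]: "phi [] = \<one>\<^bsub>W\<^esub>"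
  and phi_Cons [simp]: "phi (x # xs) = s x \<otimes>\<^bsub>W\<^esub> phi xs"
  by (simp_all add: phi_tilde_def)

lemma phi_closed: "set xs \<subseteq> {0..n} \<Longrightarrow> phi xs \<in> carrier W"
  by (induction xs) (auto simp: s_closed)

lemma phi_append:
  "set xs \<subseteq> {0..n} \<Longrightarrow> set ys \<subseteq> {0..n} \<Longrightarrow> phi (xs @ ys) = phi xs \<otimes>\<^bsub>W\<^esub> phi ys"
  by (induction xs) (auto simp: s_closed phi_closed W.m_assoc)

lemma s_square: "i \<le> n \<Longrightarrow> s i \<otimes>\<^bsub>W\<^esub> s i = \<one>\<^bsub>W\<^esub>"
proof -
  assume i: "i \<le> n"
  then have "[i] \<in> carrier G" by (simp add: carrier_G Cons_in_red_words_iff)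
  then have "phi ([i] \<otimes>\<^bsub>G\<^esub> [i]) = phi [i] \<otimes>\<^bsub>W\<^esub> phi [i]" by simp
  moreover have "[i] \<otimes>\<^bsub>G\<^esub> [i] = []" by (simp add: mult_G cancel_cons_def)
  ultimately show ?thesis using i by (simp add: s_closed)
qed

lemma inv_s: "i \<le> n \<Longrightarrow> inv\<^bsub>W\<^esub> (s i) = s i"
  using s_square s_closed W.inv_char by metis

lemma phi_rev: "set xs \<subseteq> {0..n} \<Longrightarrow> phi (rev xs) = inv\<^bsub>W\<^esub> (phi xs)"
proof (induction xs)
  case (Cons x xs)
  then have "phi (rev (x # xs)) = inv\<^bsub>W\<^esub> (phi xs) \<otimes>\<^bsub>W\<^esub> s x" by (simp add: phi_append s_closed)
  then show ?case using Cons by (simp add: W.inv_mult_group s_closed phi_closed inv_s)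
qed simp

lemma phi_cancel_cons:
  assumes "x \<le> n" "set w \<subseteq> {0..n}"
  shows "phi (cancel_cons x w) = s x \<otimes>\<^bsub>W\<^esub> phi w"
proof (cases w)
  case (Cons y w')
  have "x = y \<Longrightarrow> s x \<otimes>\<^bsub>W\<^esub> phi w = (s x \<otimes>\<^bsub>W\<^esub> s x) \<otimes>\<^bsub>W\<^esub> phi w'"
    using Cons assms by (simp add: W.m_assoc s_closed phi_closed)
  then show ?thesis using Cons assms by (auto simp: cancel_cons_def s_square phi_closed)
qed (simp add: cancel_cons_def)

lemma phi_word_mult:
  "set xs \<subseteq> {0..n} \<Longrightarrow> set ys \<subseteq> {0..n} \<Longrightarrow> phi (word_mult xs ys) = phi xs \<otimes>\<^bsub>W\<^esub> phi ys"
proof (induction xs)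
  case (Cons x xs)
  have "set (word_mult xs ys) \<subseteq> {0..n}" using set_word_mult Cons.prems by fastforce
  then show ?case using Cons by (simp add: phi_cancel_cons W.m_assoc s_closed phi_closed)
qed (simp add: phi_closed)

lemma phi_words_onto: "w \<in> carrier W \<Longrightarrow> \<exists>xs. set xs \<subseteq> {0..n} \<and> phi xs = w"
  using phi_surj by (force simp: carrier_G red_words_def)

lemma Wsub_eq_phi_image: "I \<subseteq> {0..n} \<Longrightarrow> Wsub W s I = phi ` {xs. set xs \<subseteq> I}"
proof
  assume I: "I \<subseteq> {0..n}"
  show "Wsub W s I \<subseteq> phi ` {xs. set xs \<subseteq> I}"
  proof
    fix x assume "x \<in> Wsub W s I"
    then show "x \<in> phi ` {xs. set xs \<subseteq> I}" unfolding Wsub_def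
    proof (induction rule: generate.induct)
      case one
      then show ?case by (force intro: image_eqI[of _ _ "[]"])
    next
      case (incl h)
      then show ?case using I by (auto intro!: image_eqI[of _ _ "[i]" for i] simp: s_closed)
    next
      case (inv h)
      then show ?case using I by (auto intro!: image_eqI[of _ _ "[i]" for i] simp: s_closed inv_s)
    next
      case (eng h1 h2)
      then obtain x1 x2 where "set x1 \<subseteq> I" "set x2 \<subseteq> I" "h1 = phi x1" "h2 = phi x2" by auto
      then show ?case using I by (intro image_eqI[of _ _ "x1 @ x2"]) (auto simp: phi_append)
    qed
  qed
  show "phi ` {xs. set xs \<subseteq> I} \<subseteq> Wsub W s I"
  proof safe
    fix xs assume "set xs \<subseteq> I"
    then show "phi xs \<in> Wsub W s I" unfolding Wsub_def
      by (induction xs) (auto intro: generate.intros)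
  qed
qed

lemma subgroup_Wsub: "I \<subseteq> {0..n} \<Longrightarrow> subgroup (Wsub W s I) W"
  unfolding Wsub_def by (rule W.generate_is_subgroup) (auto simp: s_closed)

lemma alpha_closed: "i \<le> n \<Longrightarrow> alpha i \<in> carrier G"
  by (simp add: alpha_def carrier_G Cons_in_red_words_iff)

lemma phi_alpha: "i \<le> n \<Longrightarrow> phi (alpha i) = s i"
  by (simp add: alpha_def s_closed)

lemma subgroup_Ksub: "I \<subseteq> {0..n} \<Longrightarrow> subgroup (Ksub n I) G"
  unfolding Ksub_def by (rule G.generate_is_subgroup) (auto simp: alpha_closed)

lemma phi_Ksub: "I \<subseteq> {0..n} \<Longrightarrow> phi ` Ksub n I = Wsub W s I"
proof -
  assume I: "I \<subseteq> {0..n}"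
  then have "alpha ` I \<subseteq> carrier G" by (auto simp: alpha_closed)
  then have "phi ` Ksub n I = generate W (phi ` alpha ` I)"
    unfolding Ksub_def using phi.generate_img by simp
  also have "phi ` alpha ` I = s ` I" using I by (force simp: phi_alpha)
  finally show ?thesis by (simp add: Wsub_def)
qed

lemma coxeter_relators_closed: "coxeter_relators n m \<subseteq> carrier G"
  unfolding coxeter_relators_def by (auto intro!: G.nat_pow_closed G.m_closed alpha_closed)

lemma coxeter_relation: "i \<le> n \<Longrightarrow> j \<le> n \<Longrightarrow> m i j = enat k \<Longrightarrow> (s i \<otimes>\<^bsub>W\<^esub> s j) [^]\<^bsub>W\<^esub> k = \<one>\<^bsub>W\<^esub>"
proof -
  assume ij: "i \<le> n" "j \<le> n" and k: "m i j = enat k"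
  let ?r = "(alpha i \<otimes>\<^bsub>G\<^esub> alpha j) [^]\<^bsub>G\<^esub> k"
  have "?r \<in> coxeter_relators n m" using ij k unfolding coxeter_relators_def by blast
  then have "?r \<in> normal_closure G (coxeter_relators n m)"
    unfolding normal_closure_def using coxeter_relators_closed
    by (intro generate.incl CollectI exI[of _ "\<one>\<^bsub>G\<^esub>"] exI[of _ ?r]) auto
  then have "phi ?r = \<one>\<^bsub>W\<^esub>" by (simp add: kernel_phi[symmetric] kernel_def)
  then show ?thesis using ij by (simp add: phi.hom_nat_pow alpha_closed phi_alpha)
qed

lemma word_action_phi_eq:
  assumes involution: "\<And>l. f l \<circ> f l = id"
    and relation: "\<And>i j k. i \<le> n \<Longrightarrow> j \<le> n \<Longrightarrow> m i j = enat k \<Longrightarrow> (f i \<circ> f j) ^^ k = id"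
    and u: "set u \<subseteq> {0..n}" and v: "set v \<subseteq> {0..n}" and eq: "phi u = phi v"
  shows "word_action f u = word_action f v"
proof -
  have relators: "word_action f r = id" if "r \<in> coxeter_relators n m" for r
  proof -
    have pow: "word_action f (y [^]\<^bsub>G\<^esub> (k::nat)) = word_action f y ^^ k" for y k
      by (induction k) (simp_all add: mult_G one_G word_action_word_mult[OF involution]
                                      funpow_Suc_right del: funpow.simps)
    from that obtain i j k where "i \<le> n" "j \<le> n" "m i j = enat k"
      "r = (alpha i \<otimes>\<^bsub>G\<^esub> alpha j) [^]\<^bsub>G\<^esub> k" by (auto simp: coxeter_relators_def)
    then show ?thesis
      using relation pow
      by (simp add: mult_G word_action_word_mult[OF involution] word_action_cancel_cons[OF involution] alpha_def)
  qed
  define r where "r = word_mult (u @ rev v) []"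
  have uv: "set (u @ rev v) \<subseteq> {0..n}" using u v by auto
  then have "r \<in> carrier G" by (simp add: r_def carrier_G word_mult_in_red_words)
  moreover have "phi r = \<one>\<^bsub>W\<^esub>"
    using uv u v eq by (simp add: r_def phi_word_mult phi_append phi_rev phi_closed)
  ultimately have "word_action f r = id"
    using word_action_normal_closure[OF involution coxeter_relators_closed relators]
    by (simp add: kernel_phi[symmetric] kernel_def)
  then have "word_action f u \<circ> (word_action f (rev v) \<circ> word_action f v) = word_action f v"
    by (simp add: r_def word_action_word_mult[OF involution] word_action_append comp_assoc[symmetric])
  then show ?thesis by (simp add: word_action_rev[OF involution])
qed

definition cos_matrix :: "nat \<Rightarrow> nat \<Rightarrow> real" where
  "cos_matrix i j = (case m i j of enat k \<Rightarrow> - cos (pi / real k) | \<infinity> \<Rightarrow> -1)"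

lemma cos_matrix_diag: "l \<le> n \<Longrightarrow> cos_matrix l l = 1"
  by (simp add: cos_matrix_def m_diag one_enat_def)

lemma tits_reflection_involution: "reflection n cos_matrix l \<circ> reflection n cos_matrix l = id"
  by (rule reflection_involution) (simp add: cos_matrix_diag)

lemma tits_reflection_relation:
  assumes "i \<le> n" "j \<le> n" "m i j = enat k"
  shows "(reflection n cos_matrix i \<circ> reflection n cos_matrix j) ^^ k = id"
proof (cases "i = j")
  case True
  then have "k = 1" using assms m_diag by (simp add: one_enat_def)
  then show ?thesis using True tits_reflection_involution by simp
next
  case False
  have "enat k \<ge> 2" using m_offdiag[OF assms(1,2) False] assms(3) by simp
  then have "k \<ge> 2" by (simp add: numeral_eq_enat)
  moreover have "m j i = enat k" using m_sym assms by simp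
  ultimately show ?thesis
    using assms False by (intro reflection_dihedral_relation)
         (auto simp: cos_matrix_diag cos_matrix_def[of i j] cos_matrix_def[of j i])
qed

lemma word_action_reflection_coord:
  "x \<notin> set u \<Longrightarrow> word_action (reflection n cos_matrix) u v x = v x"
  by (induction u arbitrary: v) (auto simp: reflection_def unit_vec_def)

text \<open>In the Tits representation \<open>s\<^sub>x\<close> negates \<open>e\<^sub>x\<close>, while a word avoiding \<open>x\<close> leaves the
  \<open>x\<close>-th coordinate of \<open>e\<^sub>x\<close> unchanged.\<close>

lemma s_in_Wsub_iff:
  assumes x: "x \<le> n" and I: "I \<subseteq> {0..n}"
  shows "s x \<in> Wsub W s I \<longleftrightarrow> x \<in> I"
proof
  assume "s x \<in> Wsub W s I"
  then obtain u where u: "set u \<subseteq> I" "phi u = s x" using Wsub_eq_phi_image[OF I] by auto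
  have "word_action (reflection n cos_matrix) [x] = word_action (reflection n cos_matrix) u"
    by (rule word_action_phi_eq[OF tits_reflection_involution])
       (use tits_reflection_relation u I x in \<open>auto simp: s_closed\<close>)
  moreover have "reflection n cos_matrix x (unit_vec x) x = -1"
    using x by (simp add: reflection_def unit_vec_def cos_matrix_diag)
  ultimately have "word_action (reflection n cos_matrix) u (unit_vec x) x = -1"
    by simp
  moreover have "x \<notin> I \<Longrightarrow> word_action (reflection n cos_matrix) u (unit_vec x) x = 1"
    using u by (subst word_action_reflection_coord) (auto simp: unit_vec_def)
  ultimately show "x \<in> I" by force
next
  assume "x \<in> I"
  then show "s x \<in> Wsub W s I" unfolding Wsub_def by (rule generate.incl[OF imageI])
qed

subsection \<open>Tits' parity action and reduced words\<close>

text \<open>Tits' action of the generators on pairs (reflection, sign): \<open>s\<^sub>l\<close> conjugates the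
  reflection and flips the sign exactly when the reflection is \<open>s\<^sub>l\<close> itself. It is defined on
  all of \<open>W \<times> bool\<close>, which is harmless.\<close>

definition parity_action :: "nat \<Rightarrow> 'a \<times> bool \<Rightarrow> 'a \<times> bool" where
  "parity_action l = (\<lambda>(t, e). if l \<le> n \<and> t \<in> carrier W
     then (s l \<otimes>\<^bsub>W\<^esub> t \<otimes>\<^bsub>W\<^esub> s l, e \<noteq> (t = s l)) else (t, e))"

lemma conj_s_eq_s_iff: "l \<le> n \<Longrightarrow> t \<in> carrier W \<Longrightarrow> s l \<otimes>\<^bsub>W\<^esub> t \<otimes>\<^bsub>W\<^esub> s l = s l \<longleftrightarrow> t = s l"
  by (metis W.l_one W.m_assoc W.m_closed W.r_one s_closed s_square)

lemma conj_s_conj_s: "l \<le> n \<Longrightarrow> t \<in> carrier W \<Longrightarrow> s l \<otimes>\<^bsub>W\<^esub> (s l \<otimes>\<^bsub>W\<^esub> t \<otimes>\<^bsub>W\<^esub> s l) \<otimes>\<^bsub>W\<^esub> s l = t"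
  by (metis W.l_one W.m_assoc W.m_closed W.r_one s_closed s_square)

lemma parity_action_involution: "parity_action l \<circ> parity_action l = id"
proof (rule ext, clarify)
  fix t e
  show "(parity_action l \<circ> parity_action l) (t, e) = id (t, e)"
  proof (cases "l \<le> n \<and> t \<in> carrier W")
    case True
    let ?t = "s l \<otimes>\<^bsub>W\<^esub> t \<otimes>\<^bsub>W\<^esub> s l"
    have "?t \<in> carrier W" using True by (simp add: s_closed)
    then have "parity_action l (?t, x) = (t, x \<noteq> (t = s l))" for x
      using True conj_s_eq_s_iff[of l ?t] conj_s_eq_s_iff[of l t] conj_s_conj_s[of l t]
      by (simp add: parity_action_def)
    then show ?thesis using True by (auto simp: parity_action_def)
  qed (auto simp: parity_action_def)
qed

lemma parity_action_pair_iterate: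
  assumes ij: "i \<le> n" "j \<le> n" and t: "t \<in> carrier W"
  defines "P \<equiv> s i \<otimes>\<^bsub>W\<^esub> s j" and "Q \<equiv> s j \<otimes>\<^bsub>W\<^esub> s i"
  shows "((parity_action i \<circ> parity_action j) ^^ l) (t, e) =
    (P [^]\<^bsub>W\<^esub> l \<otimes>\<^bsub>W\<^esub> t \<otimes>\<^bsub>W\<^esub> Q [^]\<^bsub>W\<^esub> l,
     e \<noteq> odd (length (filter (\<lambda>p. t = Q [^]\<^bsub>W\<^esub> p \<otimes>\<^bsub>W\<^esub> s j) [0..<2 * l])))"
proof (induction l)
  case (Suc l)
  have si: "s i \<in> carrier W" and sj: "s j \<in> carrier W" using ij by (simp_all add: s_closed)
  have P: "P \<in> carrier W" and Q: "Q \<in> carrier W" using si sj by (simp_all add: P_def Q_def)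
  have PQ: "P [^]\<^bsub>W\<^esub> l \<otimes>\<^bsub>W\<^esub> Q [^]\<^bsub>W\<^esub> l = \<one>\<^bsub>W\<^esub>"
    unfolding P_def Q_def using si sj ij by (intro W.involution_pow_inverse) (simp_all add: s_square)
  define x where "x = P [^]\<^bsub>W\<^esub> l \<otimes>\<^bsub>W\<^esub> t \<otimes>\<^bsub>W\<^esub> Q [^]\<^bsub>W\<^esub> l"
  have x: "x \<in> carrier W" using P Q t by (simp add: x_def)
  have cross_j: "x = s j \<longleftrightarrow> t = Q [^]\<^bsub>W\<^esub> (2 * l) \<otimes>\<^bsub>W\<^esub> s j"
  proof -
    have "x = s j \<longleftrightarrow> t = Q [^]\<^bsub>W\<^esub> l \<otimes>\<^bsub>W\<^esub> s j \<otimes>\<^bsub>W\<^esub> P [^]\<^bsub>W\<^esub> l"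
      unfolding x_def using P Q t sj PQ by (intro W.conj_eq_iff) auto
    also have "Q [^]\<^bsub>W\<^esub> l \<otimes>\<^bsub>W\<^esub> s j \<otimes>\<^bsub>W\<^esub> P [^]\<^bsub>W\<^esub> l = Q [^]\<^bsub>W\<^esub> (2 * l) \<otimes>\<^bsub>W\<^esub> s j"
      unfolding P_def Q_def using si sj
      by (simp add: W.m_assoc W.pow_mult_swap mult_2 W.nat_pow_mult[symmetric])
    finally show ?thesis .
  qed
  have cross_i: "s j \<otimes>\<^bsub>W\<^esub> x \<otimes>\<^bsub>W\<^esub> s j = s i \<longleftrightarrow> t = Q [^]\<^bsub>W\<^esub> Suc (2 * l) \<otimes>\<^bsub>W\<^esub> s j"
  proof -
    have "s j \<otimes>\<^bsub>W\<^esub> x \<otimes>\<^bsub>W\<^esub> s j = s i \<longleftrightarrow> x = s j \<otimes>\<^bsub>W\<^esub> s i \<otimes>\<^bsub>W\<^esub> s j"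
      using x sj si ij s_square by (intro W.conj_eq_iff) auto
    also have "\<dots> \<longleftrightarrow> t = Q [^]\<^bsub>W\<^esub> l \<otimes>\<^bsub>W\<^esub> (s j \<otimes>\<^bsub>W\<^esub> s i \<otimes>\<^bsub>W\<^esub> s j) \<otimes>\<^bsub>W\<^esub> P [^]\<^bsub>W\<^esub> l"
      unfolding x_def using P Q t sj si PQ by (intro W.conj_eq_iff) auto
    also have "Q [^]\<^bsub>W\<^esub> l \<otimes>\<^bsub>W\<^esub> (s j \<otimes>\<^bsub>W\<^esub> s i \<otimes>\<^bsub>W\<^esub> s j) \<otimes>\<^bsub>W\<^esub> P [^]\<^bsub>W\<^esub> l
        = (Q [^]\<^bsub>W\<^esub> l \<otimes>\<^bsub>W\<^esub> Q \<otimes>\<^bsub>W\<^esub> Q [^]\<^bsub>W\<^esub> l) \<otimes>\<^bsub>W\<^esub> s j"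
      unfolding P_def Q_def using si sj by (simp add: W.m_assoc W.pow_mult_swap[of "s i" "s j"])
    also have "Q [^]\<^bsub>W\<^esub> l \<otimes>\<^bsub>W\<^esub> Q \<otimes>\<^bsub>W\<^esub> Q [^]\<^bsub>W\<^esub> l = Q [^]\<^bsub>W\<^esub> Suc (2 * l)"
      using Q W.nat_pow_mult[OF Q, of "Suc l" l] by (simp add: mult_2)
    finally show ?thesis .
  qed
  have "s i \<otimes>\<^bsub>W\<^esub> (s j \<otimes>\<^bsub>W\<^esub> x \<otimes>\<^bsub>W\<^esub> s j) \<otimes>\<^bsub>W\<^esub> s i
        = P [^]\<^bsub>W\<^esub> Suc l \<otimes>\<^bsub>W\<^esub> t \<otimes>\<^bsub>W\<^esub> Q [^]\<^bsub>W\<^esub> Suc l"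
  proof -
    have "s i \<otimes>\<^bsub>W\<^esub> (s j \<otimes>\<^bsub>W\<^esub> x \<otimes>\<^bsub>W\<^esub> s j) \<otimes>\<^bsub>W\<^esub> s i = P \<otimes>\<^bsub>W\<^esub> x \<otimes>\<^bsub>W\<^esub> Q"
      unfolding P_def Q_def using si sj x by (simp add: W.m_assoc)
    also have "\<dots> = (P \<otimes>\<^bsub>W\<^esub> P [^]\<^bsub>W\<^esub> l) \<otimes>\<^bsub>W\<^esub> t \<otimes>\<^bsub>W\<^esub> (Q [^]\<^bsub>W\<^esub> l \<otimes>\<^bsub>W\<^esub> Q)"
      unfolding x_def using P Q t by (simp add: W.m_assoc del: W.nat_pow_Suc)
    finally show ?thesis using P by (simp only: W.nat_pow_Suc2[symmetric] W.nat_pow_Suc[symmetric])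
  qed
  then show ?case
    using Suc x ij sj cross_i cross_j by (simp add: parity_action_def x_def[symmetric])
qed (simp add: t)

lemma parity_action_relation:
  assumes ij: "i \<le> n" "j \<le> n" and k: "m i j = enat k"
  shows "(parity_action i \<circ> parity_action j) ^^ k = id"
proof (rule ext, clarify)
  fix t e
  show "((parity_action i \<circ> parity_action j) ^^ k) (t, e) = id (t, e)"
  proof (cases "t \<in> carrier W")
    case False
    have "((parity_action i \<circ> parity_action j) ^^ l) (t, e) = (t, e)" for l
      by (induction l) (use False in \<open>auto simp: parity_action_def\<close>)
    then show ?thesis by simp
  next
    case True
    define Q where "Q = s j \<otimes>\<^bsub>W\<^esub> s i"
    have si: "s i \<in> carrier W" and sj: "s j \<in> carrier W" using ij by (simp_all add: s_closed)
    have P: "(s i \<otimes>\<^bsub>W\<^esub> s j) [^]\<^bsub>W\<^esub> k = \<one>\<^bsub>W\<^esub>" by (rule coxeter_relation[OF ij k])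
    moreover have "Q [^]\<^bsub>W\<^esub> k = \<one>\<^bsub>W\<^esub>"
      using W.involution_pow_inverse[OF si sj, of k] P si sj ij by (simp add: s_square Q_def)
    then have "(t = Q [^]\<^bsub>W\<^esub> (k + p) \<otimes>\<^bsub>W\<^esub> s j) = (t = Q [^]\<^bsub>W\<^esub> p \<otimes>\<^bsub>W\<^esub> s j)" for p
      using si sj by (simp add: Q_def W.nat_pow_mult[symmetric])
    then have "even (length (filter (\<lambda>p. t = Q [^]\<^bsub>W\<^esub> p \<otimes>\<^bsub>W\<^esub> s j) [0..<2 * k]))"
      using length_filter_upt_periodic[of "\<lambda>p. t = Q [^]\<^bsub>W\<^esub> p \<otimes>\<^bsub>W\<^esub> s j" k] by (simp add: mult_2)
    ultimately show ?thesis
      using parity_action_pair_iterate[OF ij True, of k e] \<open>Q [^]\<^bsub>W\<^esub> k = \<one>\<^bsub>W\<^esub>\<close> True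
      by (simp add: Q_def)
  qed
qed

text \<open>\<open>crossing_parity ws t\<close> is the parity of the number of positions \<open>k\<close> of the word
  \<open>ws = i\<^sub>1 \<dots> i\<^sub>r\<close> at which \<open>t\<close> is crossed, i.e. \<open>t = u\<^sup>-\<^sup>1 s(i\<^sub>k) u\<close> with
  \<open>u = s(i\<^sub>k\<^sub>+\<^sub>1) \<cdots> s(i\<^sub>r)\<close>.\<close>

primrec crossing_parity :: "nat list \<Rightarrow> 'a \<Rightarrow> bool" where
  "crossing_parity [] t = False"
| "crossing_parity (i # ws) t =
     (crossing_parity ws t \<noteq> (phi ws \<otimes>\<^bsub>W\<^esub> t \<otimes>\<^bsub>W\<^esub> inv\<^bsub>W\<^esub> (phi ws) = s i))"

lemma word_action_parity_action:
  "set ws \<subseteq> {0..n} \<Longrightarrow> t \<in> carrier W \<Longrightarrow>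
   word_action parity_action ws (t, e)
     = (phi ws \<otimes>\<^bsub>W\<^esub> t \<otimes>\<^bsub>W\<^esub> inv\<^bsub>W\<^esub> (phi ws), e \<noteq> crossing_parity ws t)"
proof (induction ws)
  case (Cons i ws)
  define x where "x = phi ws \<otimes>\<^bsub>W\<^esub> t \<otimes>\<^bsub>W\<^esub> inv\<^bsub>W\<^esub> (phi ws)"
  have i: "i \<le> n" and ws: "set ws \<subseteq> {0..n}" using Cons.prems by auto
  then have x: "x \<in> carrier W" using Cons.prems by (simp add: x_def phi_closed)
  have "word_action parity_action (i # ws) (t, e) = parity_action i (x, e \<noteq> crossing_parity ws t)"
    using Cons.IH[OF ws Cons.prems(2)] by (simp add: x_def)
  also have "\<dots> = (s i \<otimes>\<^bsub>W\<^esub> x \<otimes>\<^bsub>W\<^esub> s i, (e \<noteq> crossing_parity ws t) \<noteq> (x = s i))"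
    using x i by (simp add: parity_action_def)
  also have "s i \<otimes>\<^bsub>W\<^esub> x \<otimes>\<^bsub>W\<^esub> s i = phi (i # ws) \<otimes>\<^bsub>W\<^esub> t \<otimes>\<^bsub>W\<^esub> inv\<^bsub>W\<^esub> (phi (i # ws))"
    using i ws Cons.prems
    by (simp add: x_def W.inv_mult_group W.m_assoc s_closed phi_closed inv_s)
  finally show ?case by (auto simp: x_def)
qed simp

lemma crossing_parity_phi_eq:
  assumes u: "set u \<subseteq> {0..n}" and v: "set v \<subseteq> {0..n}" and eq: "phi u = phi v"
    and t: "t \<in> carrier W"
  shows "crossing_parity u t = crossing_parity v t"
proof -
  have "word_action parity_action u = word_action parity_action v"
    by (rule word_action_phi_eq[OF parity_action_involution])
       (use parity_action_relation u v eq in auto)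
  then have "word_action parity_action u (t, False) = word_action parity_action v (t, False)"
    by simp
  then show ?thesis using word_action_parity_action[OF u t] word_action_parity_action[OF v t] by simp
qed

lemma crossing_parity_append:
  assumes A: "set A \<subseteq> {0..n}" and B: "set B \<subseteq> {0..n}" and t: "t \<in> carrier W"
  shows "crossing_parity (A @ B) t
    \<longleftrightarrow> crossing_parity B t \<noteq> crossing_parity A (phi B \<otimes>\<^bsub>W\<^esub> t \<otimes>\<^bsub>W\<^esub> inv\<^bsub>W\<^esub> (phi B))"
proof -
  have "phi B \<otimes>\<^bsub>W\<^esub> t \<otimes>\<^bsub>W\<^esub> inv\<^bsub>W\<^esub> (phi B) \<in> carrier W" using B t by (simp add: phi_closed)
  moreover have "word_action parity_action (A @ B) (t, False)
      = word_action parity_action A (word_action parity_action B (t, False))"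
    by (simp add: word_action_append)
  ultimately show ?thesis
    using word_action_parity_action[of "A @ B" t] word_action_parity_action[OF B t]
      word_action_parity_action[OF A] A B t by simp
qed

lemma crossing_parity_witness:
  "crossing_parity ws t \<Longrightarrow> set ws \<subseteq> {0..n} \<Longrightarrow> t \<in> carrier W \<Longrightarrow>
   \<exists>A y B. ws = A @ y # B \<and> t = inv\<^bsub>W\<^esub> (phi B) \<otimes>\<^bsub>W\<^esub> s y \<otimes>\<^bsub>W\<^esub> phi B"
proof (induction ws)
  case (Cons i ws)
  have i: "i \<le> n" and ws: "set ws \<subseteq> {0..n}" using Cons.prems by auto
  show ?case
  proof (cases "crossing_parity ws t")
    case True
    then obtain A y B where "ws = A @ y # B" "t = inv\<^bsub>W\<^esub> (phi B) \<otimes>\<^bsub>W\<^esub> s y \<otimes>\<^bsub>W\<^esub> phi B"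
      using Cons.IH ws Cons.prems by blast
    then show ?thesis by (intro exI[of _ "i # A"]) auto
  next
    case False
    then have "phi ws \<otimes>\<^bsub>W\<^esub> t \<otimes>\<^bsub>W\<^esub> inv\<^bsub>W\<^esub> (phi ws) = s i" using Cons.prems by simp
    then have "t = inv\<^bsub>W\<^esub> (phi ws) \<otimes>\<^bsub>W\<^esub> s i \<otimes>\<^bsub>W\<^esub> inv\<^bsub>W\<^esub> (inv\<^bsub>W\<^esub> (phi ws))"
      using W.conj_eq_iff[of "phi ws" "inv\<^bsub>W\<^esub> (phi ws)" t "s i"] ws i Cons.prems
      by (simp add: phi_closed s_closed)
    then show ?thesis using ws by (intro exI[of _ "[]"]) (auto simp: phi_closed)
  qed
qed simp

definition reduced_word :: "nat list \<Rightarrow> bool" where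
  "reduced_word ws \<longleftrightarrow> set ws \<subseteq> {0..n} \<and>
     (\<forall>v. set v \<subseteq> {0..n} \<and> phi v = phi ws \<longrightarrow> length ws \<le> length v)"

lemma reduced_word_exists: "w \<in> carrier W \<Longrightarrow> \<exists>ws. reduced_word ws \<and> phi ws = w"
proof -
  assume "w \<in> carrier W"
  then obtain xs where "set xs \<subseteq> {0..n} \<and> phi xs = w" using phi_words_onto by blast
  from ex_has_least_nat[of "\<lambda>v. set v \<subseteq> {0..n} \<and> phi v = w", OF this, of length]
  show ?thesis unfolding reduced_word_def by metis
qed

lemma reduced_word_butlast: "reduced_word (A @ [x]) \<Longrightarrow> reduced_word A"
proof -
  assume red: "reduced_word (A @ [x])"
  then have A: "set A \<subseteq> {0..n}" and x: "x \<le> n" by (auto simp: reduced_word_def)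
  have "length A \<le> length v" if "set v \<subseteq> {0..n}" "phi v = phi A" for v
  proof -
    have "phi (v @ [x]) = phi (A @ [x])" "set (v @ [x]) \<subseteq> {0..n}"
      using that A x by (simp_all add: phi_append)
    then have "length (A @ [x]) \<le> length (v @ [x])" using red unfolding reduced_word_def by blast
    then show ?thesis by simp
  qed
  then show "reduced_word A" using A by (simp add: reduced_word_def)
qed

text \<open>Were \<open>s\<^sub>x\<close> crossed inside \<open>A\<close>, say at the letter \<open>y\<close> of \<open>A = A\<^sub>1 y A\<^sub>2\<close>, then
  \<open>A\<^sub>2 x\<close> and \<open>y A\<^sub>2\<close> would represent the same element, and deleting \<open>y\<close> and \<open>x\<close> would
  shorten the word.\<close>

lemma reduced_word_snoc_not_crossing:
  assumes red: "reduced_word (A @ [x])"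
  shows "\<not> crossing_parity A (s x)"
proof
  assume "crossing_parity A (s x)"
  have A: "set A \<subseteq> {0..n}" and x: "x \<le> n" using red by (auto simp: reduced_word_def)
  obtain A1 y A2 where split: "A = A1 @ y # A2"
    and sx: "s x = inv\<^bsub>W\<^esub> (phi A2) \<otimes>\<^bsub>W\<^esub> s y \<otimes>\<^bsub>W\<^esub> phi A2"
    using crossing_parity_witness[OF \<open>crossing_parity A (s x)\<close> A s_closed[OF x]] by blast
  have A1: "set A1 \<subseteq> {0..n}" and y: "y \<le> n" and A2: "set A2 \<subseteq> {0..n}" using A split by auto
  have "s y \<otimes>\<^bsub>W\<^esub> (phi A2 \<otimes>\<^bsub>W\<^esub> s x) = phi A2"
    unfolding sx using A2 y by (simp add: W.m_assoc[symmetric] phi_closed s_closed s_square)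
  then have "phi (A @ [x]) = phi (A1 @ A2)"
    unfolding split using A1 A2 x y by (simp add: phi_append W.m_assoc s_closed phi_closed)
  moreover have "set (A1 @ A2) \<subseteq> {0..n}" using A1 A2 by simp
  ultimately have "length (A @ [x]) \<le> length (A1 @ A2)" using red unfolding reduced_word_def by metis
  then show False unfolding split by simp
qed

lemma reduced_word_snoc_crossing:
  assumes red: "reduced_word (A @ [x])"
  shows "crossing_parity (A @ [x]) (s x)"
proof -
  have A: "set A \<subseteq> {0..n}" and x: "x \<le> n" using red by (auto simp: reduced_word_def)
  have "phi [x] \<otimes>\<^bsub>W\<^esub> s x \<otimes>\<^bsub>W\<^esub> inv\<^bsub>W\<^esub> (phi [x]) = s x"
    using x by (simp add: inv_s s_square s_closed)
  then show ?thesis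
    using crossing_parity_append[OF A _ s_closed[OF x], of "[x]"] x
      reduced_word_snoc_not_crossing[OF red] by (simp add: s_closed)
qed

text \<open>Every word for \<open>w\<close> crosses the reflection of the last letter \<open>x\<close> of a reduced word
  for \<open>w\<close>; a word with letters in \<open>I\<close> can only cross reflections conjugate to some \<open>s\<^sub>y\<close>
  inside \<open>W\<^sub>I\<close>, so \<open>s\<^sub>x \<in> W\<^sub>I\<close>, and the induction proceeds with \<open>w s\<^sub>x\<close>.\<close>

lemma reduced_word_in_Wsub:
  "reduced_word ws \<Longrightarrow> I \<subseteq> {0..n} \<Longrightarrow> phi ws \<in> Wsub W s I \<Longrightarrow> set ws \<subseteq> I"
proof (induction ws rule: rev_induct)
  case (snoc x A)
  have A: "set A \<subseteq> {0..n}" and x: "x \<le> n" using snoc.prems by (auto simp: reduced_word_def)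
  obtain u where u: "set u \<subseteq> I" "phi u = phi (A @ [x])"
    using snoc.prems Wsub_eq_phi_image by auto
  have un: "set u \<subseteq> {0..n}" using u snoc.prems by auto
  have "crossing_parity u (s x)"
    using reduced_word_snoc_crossing[OF snoc.prems(1)] crossing_parity_phi_eq[OF un _ u(2) s_closed[OF x]] A x
    by simp
  then obtain A' y B where "u = A' @ y # B" and sx: "s x = inv\<^bsub>W\<^esub> (phi B) \<otimes>\<^bsub>W\<^esub> s y \<otimes>\<^bsub>W\<^esub> phi B"
    using crossing_parity_witness un s_closed[OF x] by blast
  then have yI: "y \<in> I" and BI: "set B \<subseteq> I" using u by auto
  then have "y \<le> n" "set B \<subseteq> {0..n}" using snoc.prems(2) by auto
  then have "s x = phi (rev B @ y # B)"
    unfolding sx by (subst phi_append) (auto simp: phi_rev W.m_assoc s_closed phi_closed)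
  moreover have "set (rev B @ y # B) \<subseteq> I" using yI BI by auto
  ultimately have "s x \<in> Wsub W s I" using Wsub_eq_phi_image[OF snoc.prems(2)] by auto
  then have xI: "x \<in> I" using s_in_Wsub_iff[OF x snoc.prems(2)] by simp
  have "phi A = phi (A @ [x]) \<otimes>\<^bsub>W\<^esub> s x"
    using A x by (simp add: phi_append W.m_assoc s_square s_closed phi_closed)
  also have "\<dots> = phi (u @ [x])" using u un x by (simp add: phi_append s_closed)
  finally have "phi A \<in> Wsub W s I" using Wsub_eq_phi_image[OF snoc.prems(2)] u xI
    by (auto intro!: image_eqI[of _ _ "u @ [x]"])
  then have "set A \<subseteq> I" using snoc.IH reduced_word_butlast[OF snoc.prems(1)] snoc.prems(2) by blast
  then show ?case using xI by simp
qed simp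

lemma hat_subset: "hat n J \<subseteq> {0..n}"
  by (auto simp: hat_def)

lemma Wsub_hat_Inter:
  assumes J: "J \<subseteq> {0..n}" and w: "w \<in> carrier W" and in_hat: "\<forall>i\<in>J. w \<in> Wsub W s (hat n {i})"
  shows "w \<in> Wsub W s (hat n J)"
proof -
  obtain ws where ws: "reduced_word ws" "phi ws = w" using reduced_word_exists[OF w] by blast
  have "set ws \<subseteq> hat n {i}" if "i \<in> J" for i
    using reduced_word_in_Wsub[OF ws(1) hat_subset] in_hat that ws(2) by blast
  then have "set ws \<subseteq> hat n J" using ws(1) unfolding reduced_word_def hat_def by blast
  then show ?thesis using Wsub_eq_phi_image[OF hat_subset] ws(2) by auto
qed

subsection \<open>The multicomplex and the Coxeter complex\<close>

abbreviation H :: "nat list set" where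
  "H \<equiv> kernel G W phi"

lemma orbit_class_subset:
  assumes J: "J \<subseteq> {0..n}" and g: "g \<in> carrier G" and g': "g' \<in> carrier G"
    and coset: "phi g \<otimes>\<^bsub>W\<^esub> inv\<^bsub>W\<^esub> (phi g') \<in> Wsub W s (hat n J)"
  shows "orbit_class n H J g \<subseteq> orbit_class n H J g'"
proof
  define K where "K = Ksub n (hat n J)"
  have K: "subgroup K G" unfolding K_def by (rule subgroup_Ksub[OF hat_subset])
  obtain k where k: "k \<in> K" "phi k = phi g \<otimes>\<^bsub>W\<^esub> inv\<^bsub>W\<^esub> (phi g')"
    using coset phi_Ksub[OF hat_subset] K_def by (metis imageE)
  then have k_closed: "k \<in> carrier G" using K subgroup.subset by blast
  fix Z assume "Z \<in> orbit_class n H J g"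
  then obtain h where h: "h \<in> H" "Z = K #>\<^bsub>G\<^esub> (g \<otimes>\<^bsub>G\<^esub> h)" by (auto simp: orbit_class_def K_def)
  then have h_closed: "h \<in> carrier G" by (simp add: kernel_def)
  define h' where "h' = inv\<^bsub>G\<^esub> g' \<otimes>\<^bsub>G\<^esub> (inv\<^bsub>G\<^esub> k \<otimes>\<^bsub>G\<^esub> (g \<otimes>\<^bsub>G\<^esub> h))"
  have "h' \<in> carrier G" using g g' k_closed h_closed by (simp add: h'_def)
  moreover have "phi h' = \<one>\<^bsub>W\<^esub>"
    using g g' k_closed h_closed h k by (simp add: h'_def kernel_def W.inv_mult_group W.m_assoc)
  ultimately have "h' \<in> H" by (simp add: kernel_def)
  have "g' \<otimes>\<^bsub>G\<^esub> h' = inv\<^bsub>G\<^esub> k \<otimes>\<^bsub>G\<^esub> (g \<otimes>\<^bsub>G\<^esub> h)"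
    using g g' k_closed h_closed by (simp add: h'_def G.m_assoc[symmetric])
  then have "K #>\<^bsub>G\<^esub> (g' \<otimes>\<^bsub>G\<^esub> h') = (K #>\<^bsub>G\<^esub> inv\<^bsub>G\<^esub> k) #>\<^bsub>G\<^esub> (g \<otimes>\<^bsub>G\<^esub> h)"
    using K g k_closed h_closed by (simp add: G.coset_mult_assoc subgroup.subset)
  also have "K #>\<^bsub>G\<^esub> inv\<^bsub>G\<^esub> k = K" using K k k_closed by (simp add: G.coset_join2 subgroup.m_inv_closed)
  finally show "Z \<in> orbit_class n H J g'"
    using h \<open>h' \<in> H\<close> by (auto simp: orbit_class_def K_def)
qed

lemma orbit_class_eq_iff:
  assumes J: "J \<subseteq> {0..n}" and g: "g \<in> carrier G" and g': "g' \<in> carrier G"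
  shows "orbit_class n H J g = orbit_class n H J g'
    \<longleftrightarrow> Wsub W s (hat n J) #>\<^bsub>W\<^esub> phi g = Wsub W s (hat n J) #>\<^bsub>W\<^esub> phi g'"
proof -
  have sub: "subgroup (Wsub W s (hat n J)) W" by (rule subgroup_Wsub[OF hat_subset])
  have "orbit_class n H J g = orbit_class n H J g'
        \<longleftrightarrow> phi g \<otimes>\<^bsub>W\<^esub> inv\<^bsub>W\<^esub> (phi g') \<in> Wsub W s (hat n J)"
  proof
    define K where "K = Ksub n (hat n J)"
    have K: "subgroup K G" unfolding K_def by (rule subgroup_Ksub[OF hat_subset])
    assume eq: "orbit_class n H J g = orbit_class n H J g'"
    have "K #>\<^bsub>G\<^esub> (g \<otimes>\<^bsub>G\<^esub> \<one>\<^bsub>G\<^esub>) \<in> orbit_class n H J g"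
      unfolding orbit_class_def K_def using phi.subgroup_kernel subgroup.one_closed by blast
    then obtain h where h: "h \<in> H" "K #>\<^bsub>G\<^esub> g = K #>\<^bsub>G\<^esub> (g' \<otimes>\<^bsub>G\<^esub> h)"
      using eq g unfolding orbit_class_def K_def by auto
    then have h_closed: "h \<in> carrier G" by (simp add: kernel_def)
    then have "g \<otimes>\<^bsub>G\<^esub> inv\<^bsub>G\<^esub> (g' \<otimes>\<^bsub>G\<^esub> h) \<in> K" using G.rcos_eq_iff[OF K] h g g' by simp
    then have "phi (g \<otimes>\<^bsub>G\<^esub> inv\<^bsub>G\<^esub> (g' \<otimes>\<^bsub>G\<^esub> h)) \<in> Wsub W s (hat n J)"
      using phi_Ksub[OF hat_subset] K_def by blast
    then show "phi g \<otimes>\<^bsub>W\<^esub> inv\<^bsub>W\<^esub> (phi g') \<in> Wsub W s (hat n J)"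
      using g g' h_closed h by (simp add: kernel_def)
  next
    assume coset: "phi g \<otimes>\<^bsub>W\<^esub> inv\<^bsub>W\<^esub> (phi g') \<in> Wsub W s (hat n J)"
    then have "inv\<^bsub>W\<^esub> (phi g \<otimes>\<^bsub>W\<^esub> inv\<^bsub>W\<^esub> (phi g')) \<in> Wsub W s (hat n J)"
      by (rule subgroup.m_inv_closed[OF sub])
    then have "phi g' \<otimes>\<^bsub>W\<^esub> inv\<^bsub>W\<^esub> (phi g) \<in> Wsub W s (hat n J)"
      using g g' by (simp add: W.inv_mult_group)
    then show "orbit_class n H J g = orbit_class n H J g'"
      using orbit_class_subset[OF J g g' coset] orbit_class_subset[OF J g' g] by blast
  qed
  then show ?thesis using W.rcos_eq_iff[OF sub] g g' by simp
qed

lemma Wsub_hat_eq_iff: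
  assumes "i \<le> n" "i' \<le> n"
  shows "Wsub W s (hat n {i}) = Wsub W s (hat n {i'}) \<longleftrightarrow> i = i'"
proof
  assume eq: "Wsub W s (hat n {i}) = Wsub W s (hat n {i'})"
  have "s i \<notin> Wsub W s (hat n {i})" using s_in_Wsub_iff[OF assms(1) hat_subset] by (simp add: hat_def)
  then have "i \<notin> hat n {i'}" using eq s_in_Wsub_iff[OF assms(1) hat_subset] by simp
  then show "i = i'" using assms by (simp add: hat_def)
qed simp

lemma Wsub_hat_coset_eq_imp_eq:
  assumes "i \<le> n" "i' \<le> n" "w \<in> carrier W" "w' \<in> carrier W"
    and "Wsub W s (hat n {i}) #>\<^bsub>W\<^esub> w = Wsub W s (hat n {i'}) #>\<^bsub>W\<^esub> w'"
  shows "i = i'"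
proof -
  have "Wsub W s (hat n {i}) = Wsub W s (hat n {i'})"
    using assms(3-5) by (rule W.rcos_eq_imp_subgroup_eq[OF subgroup_Wsub[OF hat_subset] subgroup_Wsub[OF hat_subset]])
  then show ?thesis using Wsub_hat_eq_iff assms(1,2) by simp
qed

lemma orbit_class_vertex_eq_iff:
  assumes i: "i \<le> n" "i' \<le> n" and g: "g \<in> carrier G" "g' \<in> carrier G"
  shows "orbit_class n H {i} g = orbit_class n H {i'} g'
    \<longleftrightarrow> Wsub W s (hat n {i}) #>\<^bsub>W\<^esub> phi g = Wsub W s (hat n {i'}) #>\<^bsub>W\<^esub> phi g'"
proof -
  have "i = i'" if eq: "orbit_class n H {i} g = orbit_class n H {i'} g'"
  proof -
    have "Ksub n (hat n {i}) #>\<^bsub>G\<^esub> (g \<otimes>\<^bsub>G\<^esub> \<one>\<^bsub>G\<^esub>) \<in> orbit_class n H {i} g"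
      unfolding orbit_class_def using phi.subgroup_kernel subgroup.one_closed by blast
    then obtain h where h: "h \<in> H" "Ksub n (hat n {i}) #>\<^bsub>G\<^esub> g = Ksub n (hat n {i'}) #>\<^bsub>G\<^esub> (g' \<otimes>\<^bsub>G\<^esub> h)"
      using eq g unfolding orbit_class_def by auto
    moreover have "g' \<otimes>\<^bsub>G\<^esub> h \<in> carrier G" using g h by (simp add: kernel_def)
    ultimately have "Ksub n (hat n {i}) = Ksub n (hat n {i'})"
      using G.rcos_eq_imp_subgroup_eq[OF subgroup_Ksub[OF hat_subset] subgroup_Ksub[OF hat_subset] g(1)]
      by blast
    then show "i = i'" using phi_Ksub[OF hat_subset] Wsub_hat_eq_iff[OF i] by metis
  qed
  moreover have "i = i'"
    if "Wsub W s (hat n {i}) #>\<^bsub>W\<^esub> phi g = Wsub W s (hat n {i'}) #>\<^bsub>W\<^esub> phi g'"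
    using Wsub_hat_coset_eq_imp_eq[OF i _ _ that] g by simp
  ultimately show ?thesis using orbit_class_eq_iff[of "{i}" g g'] i g by auto
qed

lemma multicomplex_cells_eq:
  "multicomplex_cells n H = {(\<lambda>i. orbit_class n H {i} g) ` J | J g. J \<subseteq> {0..n} \<and> g \<in> carrier G}"
  by (auto simp: multicomplex_cells_def multicells_def lies_over_def)

lemma cell_determines_multicell:
  assumes J: "J \<subseteq> {0..n}" "J' \<subseteq> {0..n}" and g: "g \<in> carrier G" "g' \<in> carrier G"
    and eq: "(\<lambda>i. orbit_class n H {i} g) ` J = (\<lambda>i. orbit_class n H {i} g') ` J'"
  shows "J = J'" and "orbit_class n H J g = orbit_class n H J g'"
proof -
  have vertex: "i \<in> J' \<and> orbit_class n H {i} g = orbit_class n H {i} g'" if "i \<in> J" for i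
  proof -
    obtain i' where i': "i' \<in> J'" and orbit: "orbit_class n H {i} g = orbit_class n H {i'} g'"
      using eq \<open>i \<in> J\<close> by blast
    have "i \<le> n" "i' \<le> n" using J that i' by auto
    then have "i = i'"
      using orbit orbit_class_vertex_eq_iff[of i i' g g'] Wsub_hat_coset_eq_imp_eq[of i i' "phi g" "phi g'"] g
      by simp
    then show ?thesis using i' orbit by simp
  qed
  moreover have "i \<in> J" if "i \<in> J'" for i
  proof -
    have "orbit_class n H {i} g' \<in> (\<lambda>i. orbit_class n H {i} g) ` J" using eq that by simp
    then obtain i' where "i' \<in> J" "orbit_class n H {i'} g = orbit_class n H {i} g'" by auto
    then have "orbit_class n H {i'} g' = orbit_class n H {i} g'" using vertex by simp
    moreover have "i \<le> n" "i' \<le> n" using J that \<open>i' \<in> J\<close> by auto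
    ultimately show ?thesis
      using orbit_class_vertex_eq_iff[of i' i g' g'] Wsub_hat_coset_eq_imp_eq[of i' i "phi g'" "phi g'"]
        \<open>i' \<in> J\<close> g by simp
  qed
  ultimately show "J = J'" by blast
  have in_hat: "phi g \<otimes>\<^bsub>W\<^esub> inv\<^bsub>W\<^esub> (phi g') \<in> Wsub W s (hat n {i})" if "i \<in> J" for i
  proof -
    have "{i} \<subseteq> {0..n}" using J that by auto
    then show ?thesis
      using vertex[OF that] orbit_class_eq_iff[of "{i}" g g'] W.rcos_eq_iff[OF subgroup_Wsub[OF hat_subset]] g
      by simp
  qed
  have "phi g \<otimes>\<^bsub>W\<^esub> inv\<^bsub>W\<^esub> (phi g') \<in> Wsub W s (hat n J)"
    using g in_hat by (intro Wsub_hat_Inter[OF J(1)]) auto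
  then show "orbit_class n H J g = orbit_class n H J g'"
    using orbit_class_eq_iff[OF J(1) g] W.rcos_eq_iff[OF subgroup_Wsub[OF hat_subset], of "phi g" "phi g'"] g
    by simp
qed

lemma multiplicity_eq_1:
  assumes "\<sigma> \<in> multicomplex_cells n H"
  shows "multiplicity n H \<sigma> = 1"
proof -
  obtain J g where J: "J \<subseteq> {0..n}" and g: "g \<in> carrier G"
    and \<sigma>: "\<sigma> = (\<lambda>i. orbit_class n H {i} g) ` J"
    using assms unfolding multicomplex_cells_eq by blast
  have unique: "M = (J, orbit_class n H J g)" if M: "M \<in> multicells n H" "lies_over n H M \<sigma>" for M
  proof -
    obtain J' where J': "J' \<subseteq> {0..n}" "fst M = J'" using M(1) by (auto simp: multicells_def)
    obtain g' where g': "g' \<in> carrier G" "snd M = orbit_class n H J' g'"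
      "\<sigma> = (\<lambda>i. orbit_class n H {i} g') ` J'"
      using M(2) J'(2) by (auto simp: lies_over_def)
    have "J = J'" "orbit_class n H J g = orbit_class n H J g'"
      using cell_determines_multicell[OF J J'(1) g g'(1)] \<sigma> g'(3) by simp_all
    then show ?thesis using J'(2) g'(2) by (simp add: prod_eq_iff)
  qed
  have "(J, orbit_class n H J g) \<in> multicells n H" using J g by (auto simp: multicells_def)
  moreover have "lies_over n H (J, orbit_class n H J g) \<sigma>" using g \<sigma> by (auto simp: lies_over_def)
  ultimately have "{M \<in> multicells n H. lies_over n H M \<sigma>} = {(J, orbit_class n H J g)}"
    using unique by blast
  then show ?thesis by (simp add: multiplicity_def)
qed

lemma complex_iso_multicomplex_coxeter_complex:
  "complex_iso (multicomplex_cells n H) (coxeter_complex W n s)"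
proof -
  define S where "S = (\<lambda>(J, g). (\<lambda>i. (i, g)) ` J) ` (Pow {0..n} \<times> carrier G)"
  have cells: "(`) c ` S = {(\<lambda>i. c (i, g)) ` J | J g. J \<subseteq> {0..n} \<and> g \<in> carrier G}"
    for c :: "nat \<times> nat list \<Rightarrow> 'c"
    unfolding S_def by (auto simp: image_image)
  let ?a = "\<lambda>(i, g). orbit_class n H {i} g"
  let ?b = "\<lambda>(i, g). Wsub W s (hat n {i}) #>\<^bsub>W\<^esub> phi g"
  have "(`) ?a ` S = multicomplex_cells n H"
    by (simp only: cells multicomplex_cells_eq) simp
  moreover have "(`) ?b ` S = coxeter_complex W n s"
    unfolding cells coxeter_complex_def phi_surj[symmetric] by auto
  moreover have "?a p = ?a q \<longleftrightarrow> ?b p = ?b q" if pq: "p \<in> \<Union>S" "q \<in> \<Union>S" for p q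
  proof -
    have "\<Union>S \<subseteq> {..n} \<times> carrier G" by (auto simp: S_def)
    then obtain i g i' g' where "p = (i, g)" "q = (i', g')" "i \<le> n" "i' \<le> n" "g \<in> carrier G" "g' \<in> carrier G"
      using pq by blast
    then show ?thesis by (simp add: orbit_class_vertex_eq_iff)
  qed
  ultimately show ?thesis using complex_iso_images[of S ?a ?b] by simp
qed

end

theorem proposition10:
  fixes W :: "('a, 'b) monoid_scheme" and n :: nat and s :: "nat \<Rightarrow> 'a"
    and m :: "nat \<Rightarrow> nat \<Rightarrow> enat"
  assumes "coxeter_system W n s m"
  defines "H \<equiv> kernel (Gn2 n) W (phi_tilde W s)"
  shows "(\<forall>\<sigma> \<in> multicomplex_cells n H. multiplicity n H \<sigma> = 1)
         \<and> complex_iso (multicomplex_cells n H) (coxeter_complex W n s)"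
proof -
  interpret coxeter W n s m by (rule coxeter.intro[OF assms(1)])
  show ?thesis
    unfolding H_def using multiplicity_eq_1 complex_iso_multicomplex_coxeter_complex by blast
qed

end
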